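(* Let $(G,\mathcal{P})$ and $(H,\mathcal{Q})$ be group pairs with finite generating sets $S$ of $G$ and $T$ of $H$. If $(G,\mathcal{P})$ is a quasi-retract of $(H,\mathcal{Q})$ and $\hat\Gamma(H,\mathcal{Q},T)$ is coarsely unicone simply-connected, then $\hat\Gamma(G,\mathcal{P},S)$ is coarsely unicone simply-connected.
   Context: A group pair $(G,\mathcal{P})$: $G$ finitely generated, $\mathcal{P}$ a non-empty finite collection of subgroups (repetitions allowed); $G/\mathcal{P}=\coprod_{P\in\mathcal{P}}G/P$, elements viewed as cosets (subsets of $G$). The coned-off Cayley graph $\hat\Gamma(G,\mathcal{P},S)$ has vertex set $G\sqcup G/\mathcal{P}$, edges $\{g,g'\}$ for $g^{-1}g'\in S$ and $\{g,A\}$ for $g\in A\in G/\mathcal{P}$; vertices in $G/\mathcal{P}$ are cone vertices. An edge loop of length $l$ is a vertex sequence $v_1,\dots,v_l$ with $\{v_i,v_{i+1}\}$ and $\{v_l,v_1\}$ edges; it is unicone if it has at most one cone vertex. $\hat\Gamma_l$ is the 2-complex obtained by attaching a 2-cell along each unicone loop of length $<l$; the graph is coarsely unicone simply-connected if some $\hat\Gamma_l$ is simply-connected. With word metrics, $f$ is $(L,C)$-Lipschitz if $d(f(x),f(x'))\le L\,d(x,x')+C$. For $L\ge1,C\ge0,M\ge0$, an $(L,C,M)$-Lipschitz map of pairs $f=(f_1,f_2)$ is an $(L,C)$-Lipschitz $f_1\colon G\to H$ and $f_2\colon G/\mathcal{P}\to H/\mathcal{Q}$ with Hausdorff distance between $f_1(A)$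 and $f_2(A)$ less than $M$ for all $A$. An $(L,C,M)$-quasi-retraction of pairs $(f,r)$ consists of such $f\colon(G,\mathcal{P})\to(H,\mathcal{Q})$, $r\colon(H,\mathcal{Q})\to(G,\mathcal{P})$ with $d_G(r_1f_1(g),g)\le C$ for all $g$ and $r_2\circ f_2=\mathrm{id}$; $(G,\mathcal{P})$ is a quasi-retract of $(H,\mathcal{Q})$ if such $(f,r)$ exists for some constants. *)

theory Defs
  imports "HOL-Algebra.Generated_Groups" "HOL-Library.Extended_Real"
begin

text \<open>A group pair: a group G together with a non-empty finite collection of
subgroups, given as an indexed family P over a finite non-empty index set I
(so repetitions are allowed).\<close>
definition group_pair :: "('a, 'c) monoid_scheme \<Rightarrow> 'i set \<Rightarrow> ('i \<Rightarrow> 'a set) \<Rightarrow> bool" where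
  "group_pair G I P \<longleftrightarrow> group G \<and> finite I \<and> I \<noteq> {} \<and> (\<forall>i\<in>I. subgroup (P i) G)"

definition fin_gen_set :: "('a, 'c) monoid_scheme \<Rightarrow> 'a set \<Rightarrow> bool" where
  "fin_gen_set G S \<longleftrightarrow> finite S \<and> S \<subseteq> carrier G \<and> generate G S = carrier G"

text \<open>G/P = disjoint union of the left coset spaces G/P_i; an element is a pair
(i, gP_i), the coset being a subset of G.\<close>
definition cosets_pair :: "('a, 'c) monoid_scheme \<Rightarrow> 'i set \<Rightarrow> ('i \<Rightarrow> 'a set) \<Rightarrow> ('i \<times> 'a set) set" where
  "cosets_pair G I P = {(i, x <#\<^bsub>G\<^esub> P i) | i x. i \<in> I \<and> x \<in> carrier G}"

definition word_length :: "('a, 'c) monoid_scheme \<Rightarrow> 'a set \<Rightarrow> 'a \<Rightarrow> nat" where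
  "word_length G S x = (LEAST n. \<exists>w. length w = n \<and> set w \<subseteq> S \<union> (\<lambda>s. inv\<^bsub>G\<^esub> s) ` S
        \<and> foldr (\<lambda>a b. a \<otimes>\<^bsub>G\<^esub> b) w \<one>\<^bsub>G\<^esub> = x)"

definition word_dist :: "('a, 'c) monoid_scheme \<Rightarrow> 'a set \<Rightarrow> 'a \<Rightarrow> 'a \<Rightarrow> nat" where
  "word_dist G S g h = word_length G S (inv\<^bsub>G\<^esub> g \<otimes>\<^bsub>G\<^esub> h)"

definition hausdorff_word :: "('a, 'c) monoid_scheme \<Rightarrow> 'a set \<Rightarrow> 'a set \<Rightarrow> 'a set \<Rightarrow> ereal" where
  "hausdorff_word G S X Y = max (SUP x\<in>X. INF y\<in>Y. ereal (real (word_dist G S x y)))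
                                (SUP y\<in>Y. INF x\<in>X. ereal (real (word_dist G S x y)))"

definition lipschitz_pair ::
  "('a, 'c) monoid_scheme \<Rightarrow> 'a set \<Rightarrow> 'i set \<Rightarrow> ('i \<Rightarrow> 'a set) \<Rightarrow>
   ('b, 'd) monoid_scheme \<Rightarrow> 'b set \<Rightarrow> 'j set \<Rightarrow> ('j \<Rightarrow> 'b set) \<Rightarrow>
   real \<Rightarrow> real \<Rightarrow> real \<Rightarrow> ('a \<Rightarrow> 'b) \<Rightarrow> ('i \<times> 'a set \<Rightarrow> 'j \<times> 'b set) \<Rightarrow> bool" where
  "lipschitz_pair G S I P H T J Q L C M f1 f2 \<longleftrightarrow>
     L \<ge> 1 \<and> C \<ge> 0 \<and> M \<ge> 0 \<and>
     f1 \<in> carrier G \<rightarrow> carrier H \<and>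
     f2 \<in> cosets_pair G I P \<rightarrow> cosets_pair H J Q \<and>
     (\<forall>x\<in>carrier G. \<forall>y\<in>carrier G.
        real (word_dist H T (f1 x) (f1 y)) \<le> L * real (word_dist G S x y) + C) \<and>
     (\<forall>A\<in>cosets_pair G I P. hausdorff_word H T (f1 ` snd A) (snd (f2 A)) < ereal M)"

definition quasi_retract_pair ::
  "('a, 'c) monoid_scheme \<Rightarrow> 'a set \<Rightarrow> 'i set \<Rightarrow> ('i \<Rightarrow> 'a set) \<Rightarrow>
   ('b, 'd) monoid_scheme \<Rightarrow> 'b set \<Rightarrow> 'j set \<Rightarrow> ('j \<Rightarrow> 'b set) \<Rightarrow> bool" where
  "quasi_retract_pair G S I P H T J Q \<longleftrightarrow>
     (\<exists>L C M f1 f2 r1 r2.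
        lipschitz_pair G S I P H T J Q L C M f1 f2 \<and>
        lipschitz_pair H T J Q G S I P L C M r1 r2 \<and>
        (\<forall>g\<in>carrier G. real (word_dist G S (r1 (f1 g)) g) \<le> C) \<and>
        (\<forall>A\<in>cosets_pair G I P. r2 (f2 A) = A))"

definition cone_vertices :: "('a, 'c) monoid_scheme \<Rightarrow> 'i set \<Rightarrow> ('i \<Rightarrow> 'a set) \<Rightarrow> ('a + ('i \<times> 'a set)) set" where
  "cone_vertices G I P = Inl ` carrier G \<union> Inr ` cosets_pair G I P"

definition cone_adj :: "('a, 'c) monoid_scheme \<Rightarrow> 'a set \<Rightarrow> ('a + ('i \<times> 'a set)) \<Rightarrow> ('a + ('i \<times> 'a set)) \<Rightarrow> bool" where
  "cone_adj G S u v = (case (u, v) of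
      (Inl g, Inl g') \<Rightarrow> inv\<^bsub>G\<^esub> g \<otimes>\<^bsub>G\<^esub> g' \<in> S \<or> inv\<^bsub>G\<^esub> g' \<otimes>\<^bsub>G\<^esub> g \<in> S
    | (Inl g, Inr A) \<Rightarrow> g \<in> snd A
    | (Inr A, Inl g) \<Rightarrow> g \<in> snd A
    | (Inr _, Inr _) \<Rightarrow> False)"

definition edge_path :: "'v set \<Rightarrow> ('v \<Rightarrow> 'v \<Rightarrow> bool) \<Rightarrow> 'v list \<Rightarrow> bool" where
  "edge_path V adj p \<longleftrightarrow> p \<noteq> [] \<and> set p \<subseteq> V \<and> (\<forall>i. Suc i < length p \<longrightarrow> adj (p ! i) (p ! Suc i))"

definition edge_loop :: "'v set \<Rightarrow> ('v \<Rightarrow> 'v \<Rightarrow> bool) \<Rightarrow> 'v list \<Rightarrow> bool" where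
  "edge_loop V adj c \<longleftrightarrow> edge_path V adj c \<and> adj (last c) (hd c)"

definition is_cone_vertex :: "'a + 'b \<Rightarrow> bool" where
  "is_cone_vertex v = (case v of Inl _ \<Rightarrow> False | Inr _ \<Rightarrow> True)"

definition unicone :: "('a + 'b) list \<Rightarrow> bool" where
  "unicone c \<longleftrightarrow> length (filter is_cone_vertex c) \<le> 1"

text \<open>Elementary homotopies of edge paths in the 2-complex with 1-skeleton the
graph (V, adj) and 2-cells attached along the loops in Cells: removing a
backtrack u v u, or inserting the boundary of a 2-cell.\<close>
inductive htpy_step :: "'v set \<Rightarrow> ('v \<Rightarrow> 'v \<Rightarrow> bool) \<Rightarrow> 'v list set \<Rightarrow> 'v list \<Rightarrow> 'v list \<Rightarrow> bool"
  for V adj Cells where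
  backtrack: "edge_path V adj (p @ [u, v, u] @ q) \<Longrightarrow>
      htpy_step V adj Cells (p @ [u, v, u] @ q) (p @ [u] @ q)"
| cell: "c \<in> Cells \<Longrightarrow> edge_path V adj (p @ [hd c] @ q) \<Longrightarrow>
      htpy_step V adj Cells (p @ [hd c] @ q) (p @ c @ [hd c] @ q)"

definition simply_connected_2cx :: "'v set \<Rightarrow> ('v \<Rightarrow> 'v \<Rightarrow> bool) \<Rightarrow> 'v list set \<Rightarrow> bool" where
  "simply_connected_2cx V adj Cells \<longleftrightarrow>
     V \<noteq> {} \<and>
     (\<forall>u\<in>V. \<forall>v\<in>V. \<exists>p. edge_path V adj p \<and> hd p = u \<and> last p = v) \<and>
     (\<forall>p. edge_path V adj p \<and> hd p = last p \<longrightarrow>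
        (\<lambda>x y. htpy_step V adj Cells x y \<or> htpy_step V adj Cells y x)\<^sup>*\<^sup>* p [hd p])"

text \<open>The 2-complex hat-Gamma_l: attach a 2-cell along every unicone edge loop of length < l.\<close>
definition cone_cells :: "('a, 'c) monoid_scheme \<Rightarrow> 'i set \<Rightarrow> ('i \<Rightarrow> 'a set) \<Rightarrow> 'a set \<Rightarrow> nat
    \<Rightarrow> ('a + ('i \<times> 'a set)) list set" where
  "cone_cells G I P S l = {c. edge_loop (cone_vertices G I P) (cone_adj G S) c \<and> unicone c \<and> length c < l}"

definition coarsely_unicone_sc :: "('a, 'c) monoid_scheme \<Rightarrow> 'i set \<Rightarrow> ('i \<Rightarrow> 'a set) \<Rightarrow> 'a set \<Rightarrow> bool" where
  "coarsely_unicone_sc G I P S \<longleftrightarrow>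
     (\<exists>l. simply_connected_2cx (cone_vertices G I P) (cone_adj G S) (cone_cells G I P S l))"

end

theory Submission
  imports Defs
begin

(* The quasi-retraction (f, r) induces maps \<Phi> and \<Psi> between the coned-off Cayley graphs that
   send an edge to an edge path of length at most K + 1, where K \<ge> L + C + M, carrying at most
   one cone vertex, placed at its end. A loop \<gamma> in the graph of G is homotopic, across a "ladder"
   of short cells whose rungs join each vertex v to \<Psi> (\<Phi> v), to the loop \<Psi> (\<Phi> \<gamma>). Its image
   \<Phi> \<gamma> is null-homotopic in the 2-complex of H, and \<Psi> carries every elementary homotopy there
   (filling a unicone loop shorter than l, or cancelling a backtrack) to one across a unicone loop
   of length at most (K + 1) (l + 2). Hence all loops are null-homotopic once unicone loops of
   length up to a bound of order K^2 l are filled. *)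

section \<open>Edge paths and their homotopies\<close>

lemma edge_path_iff_successively:
  "edge_path V adj p \<longleftrightarrow> p \<noteq> [] \<and> set p \<subseteq> V \<and> successively adj p"
  unfolding edge_path_def successively_conv_nth by blast

lemma edge_path_append_iff:
  "edge_path V adj (xs @ ys) \<longleftrightarrow>
   (xs = [] \<longrightarrow> edge_path V adj ys) \<and> (ys = [] \<longrightarrow> edge_path V adj xs) \<and>
   (xs \<noteq> [] \<and> ys \<noteq> [] \<longrightarrow> edge_path V adj xs \<and> edge_path V adj ys \<and> adj (last xs) (hd ys))"
  unfolding edge_path_iff_successively successively_append_iff by auto

lemma edge_path_singleton [simp]: "edge_path V adj [x] \<longleftrightarrow> x \<in> V"
  unfolding edge_path_iff_successively by auto

lemma edge_path_Cons_Cons: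
  "edge_path V adj (x # y # p) \<longleftrightarrow> x \<in> V \<and> adj x y \<and> edge_path V adj (y # p)"
  unfolding edge_path_iff_successively by auto

lemma edge_path_appendI:
  "edge_path V adj p \<Longrightarrow> edge_path V adj q \<Longrightarrow> adj (last p) (hd q) \<Longrightarrow> edge_path V adj (p @ q)"
  unfolding edge_path_iff_successively successively_append_iff by auto

lemma edge_path_append_tl:
  assumes "edge_path V adj p" "edge_path V adj q" "last p = hd q"
  shows "edge_path V adj (p @ tl q)"
  using assms by (cases q; cases "tl q") (auto simp: edge_path_Cons_Cons intro!: edge_path_appendI)

lemma last_append_tl [simp]: "q \<noteq> [] \<Longrightarrow> last p = hd q \<Longrightarrow> last (p @ tl q) = last q"
  by (cases q; cases "tl q") auto

lemma edge_path_rev: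
  assumes "\<And>x y. adj x y \<Longrightarrow> adj y x"
  shows "edge_path V adj (rev p) \<longleftrightarrow> edge_path V adj p"
  unfolding edge_path_iff_successively successively_rev using assms
  by (metis set_rev rev_is_Nil_conv successively_mono)

lemma edge_path_infix: "edge_path V adj (a @ p @ b) \<Longrightarrow> p \<noteq> [] \<Longrightarrow> edge_path V adj p"
  unfolding edge_path_append_iff by (cases "a = []"; cases "b = []") auto

lemma edge_path_replace_infix:
  assumes "edge_path V adj (a @ p @ b)" "edge_path V adj p'" "p \<noteq> []"
    "hd p' = hd p" "last p' = last p"
  shows "edge_path V adj (a @ p' @ b)"
  using assms unfolding edge_path_append_iff by (cases "a = []"; cases "b = []") (auto simp: edge_path_def)

lemma edge_loop_iff: "edge_loop V adj c \<longleftrightarrow> c \<noteq> [] \<and> edge_path V adj (c @ [hd c])"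
  unfolding edge_loop_def edge_path_append_iff by (auto simp: edge_path_def)

lemma edge_path_insert_loop:
  assumes "edge_path V adj (p @ [hd c] @ q)" "edge_loop V adj c"
  shows "edge_path V adj (p @ c @ [hd c] @ q)"
  using edge_path_replace_infix[OF assms(1), of "c @ [hd c]"] assms(2)
  by (simp add: edge_loop_iff)

abbreviation homotopic ::
  "'v set \<Rightarrow> ('v \<Rightarrow> 'v \<Rightarrow> bool) \<Rightarrow> 'v list set \<Rightarrow> 'v list \<Rightarrow> 'v list \<Rightarrow> bool"
where
  "homotopic V adj Cells \<equiv> (\<lambda>x y. htpy_step V adj Cells x y \<or> htpy_step V adj Cells y x)\<^sup>*\<^sup>*"

lemma homotopic_sym: "homotopic V adj Cells p q \<Longrightarrow> homotopic V adj Cells q p"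
proof (induction rule: rtranclp_induct)
  case (step y z)
  have "htpy_step V adj Cells z y \<or> htpy_step V adj Cells y z" using step.hyps(2) by blast
  then show ?case using step.IH by (rule converse_rtranclp_into_rtranclp)
qed simp

lemma htpy_step_in_context:
  assumes "htpy_step V adj Cells p q" "edge_path V adj (a @ p @ b)"
  shows "htpy_step V adj Cells (a @ p @ b) (a @ q @ b)"
  using assms(1)
proof cases
  case (backtrack p' u v q')
  then show ?thesis using assms(2) htpy_step.backtrack[of V adj "a @ p'" u v "q' @ b" Cells] by simp
next
  case (cell c p' q')
  then show ?thesis using assms(2) htpy_step.cell[of c Cells V adj "a @ p'" "q' @ b"] by simp
qed

context
  fixes V :: "'v set" and adj :: "'v \<Rightarrow> 'v \<Rightarrow> bool" and Cells :: "'v list set"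
  assumes cells_are_loops: "\<forall>c\<in>Cells. edge_loop V adj c"
begin

lemma htpy_step_endpoints:
  assumes "htpy_step V adj Cells p q"
  shows "edge_path V adj p \<and> edge_path V adj q \<and> hd q = hd p \<and> last q = last p"
  using assms
proof cases
  case (backtrack p' u v q')
  have "u \<in> V" using edge_path_infix[of V adj p' "[u]" "[v, u] @ q'"] backtrack by simp
  then have "edge_path V adj (p' @ [u] @ q')"
    using edge_path_replace_infix[OF backtrack(3), of "[u]"] by simp
  then show ?thesis using backtrack by (cases p'; cases q' rule: rev_cases) auto
next
  case (cell c p' q')
  have "edge_loop V adj c" using cells_are_loops cell(3) by blast
  then have "c \<noteq> []" "edge_path V adj (p' @ c @ [hd c] @ q')"
    using edge_path_insert_loop[OF cell(4)] by (auto simp: edge_loop_iff)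
  then show ?thesis using cell by (cases p'; cases q' rule: rev_cases) auto
qed

lemma homotopic_endpoints:
  assumes "homotopic V adj Cells p q" "edge_path V adj p"
  shows "edge_path V adj q \<and> hd q = hd p \<and> last q = last p"
  using assms(1)
proof (induction rule: rtranclp_induct)
  case (step y z)
  then show ?case using htpy_step_endpoints assms(2) by metis
qed (use assms(2) in simp)

lemma homotopic_in_context:
  assumes "homotopic V adj Cells p q" "edge_path V adj (a @ p @ b)"
  shows "homotopic V adj Cells (a @ p @ b) (a @ q @ b)"
  using assms(1)
proof (induction rule: rtranclp_induct)
  case (step y z)
  have ey: "edge_path V adj (a @ y @ b)"
    using homotopic_endpoints[OF step.IH assms(2)] by blast
  have ez: "edge_path V adj (a @ z @ b)"
    using edge_path_replace_infix[OF ey] htpy_step_endpoints step.hyps(2) by (metis edge_path_def)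
  from step.hyps(2) have "htpy_step V adj Cells (a @ y @ b) (a @ z @ b) \<or>
      htpy_step V adj Cells (a @ z @ b) (a @ y @ b)"
    using htpy_step_in_context ey ez by blast
  then show ?case using step.IH by (simp add: rtranclp.rtrancl_into_rtrancl)
qed simp

lemma homotopic_retrace:
  assumes "edge_path V adj (a @ (x # q) @ tl (rev (x # q)) @ b)"
  shows "homotopic V adj Cells (a @ (x # q) @ tl (rev (x # q)) @ b) (a @ [x] @ b)"
  using assms
proof (induction q arbitrary: a x b)
  case (Cons y q)
  have split: "a @ (x # y # q) @ tl (rev (x # y # q)) @ b = (a @ [x]) @ (y # q) @ tl (rev (y # q)) @ ([x] @ b)"
    by (cases "rev q") auto
  have retraced: "homotopic V adj Cells (a @ (x # y # q) @ tl (rev (x # y # q)) @ b) (a @ [x, y, x] @ b)"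
    using Cons.IH[of "a @ [x]" y "[x] @ b"] Cons.prems unfolding split by simp
  then have "edge_path V adj (a @ [x, y, x] @ b)"
    using homotopic_endpoints[OF _ Cons.prems] by blast
  then have "htpy_step V adj Cells (a @ [x, y, x] @ b) (a @ [x] @ b)"
    by (rule htpy_step.backtrack)
  then show ?case using retraced by (simp add: rtranclp.rtrancl_into_rtrancl)
qed simp

lemma homotopic_across_cell:
  assumes R: "edge_path V adj R" "length R \<ge> 2"
    and Q: "edge_path V adj Q" "hd R = hd Q" "last R = last Q"
    and cell: "butlast (R @ tl (rev Q)) \<in> Cells"
    and path: "edge_path V adj (a @ Q @ b)"
  shows "homotopic V adj Cells (a @ Q @ b) (a @ R @ b)"
proof -
  \<comment> \<open>insert the cell at the start of Q, then cancel the part of its boundary that retraces Q\<close>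
  obtain x Q' where Qx: "Q = x # Q'" using Q by (cases Q) (auto simp: edge_path_def)
  define R' where "R' = tl R"
  have Rx: "R = x # R'" "R' \<noteq> []" using R Q Qx unfolding R'_def by (cases R; auto)+
  define c where "c = butlast (R @ tl (rev Q))"
  have hd_c: "hd c = x" using Rx unfolding c_def by (cases R') (auto simp: butlast_append)
  have "last (R @ tl (rev Q)) = x"
    using Q Qx Rx by (cases "rev Q'") (auto simp: last_append)
  then have c_x: "c @ [x] = R @ tl (rev Q)"
    unfolding c_def using Rx by (metis append_butlast_last_id append_is_Nil_conv list.distinct(1))
  have "htpy_step V adj Cells (a @ [hd c] @ (Q' @ b)) (a @ c @ [hd c] @ (Q' @ b))"
    using htpy_step.cell[of c Cells V adj a "Q' @ b"] cell path Qx hd_c unfolding c_def by simp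
  then have inserted: "homotopic V adj Cells (a @ Q @ b) (a @ c @ [x] @ (Q' @ b))"
    using Qx hd_c by (simp add: r_into_rtranclp)
  have "rev Q = last Q # tl (rev Q)" using Qx by (metis Nil_is_rev_conv hd_rev list.collapse list.distinct(1))
  then have split: "a @ c @ [x] @ (Q' @ b) =
      (a @ butlast R) @ (last Q # tl (rev Q)) @ tl (rev (last Q # tl (rev Q))) @ b"
    using c_x Qx Rx Q(3) by (metis append.assoc append_Cons append_butlast_last_id list.sel(3)
        list.distinct(1) rev_rev_ident self_append_conv2 rev.simps(2) rev_append)
  have "edge_path V adj (a @ c @ [x] @ (Q' @ b))" using homotopic_endpoints[OF inserted path] by blast
  then have retraced: "homotopic V adj Cells (a @ c @ [x] @ (Q' @ b)) ((a @ butlast R) @ [last Q] @ b)"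
    unfolding split by (rule homotopic_retrace[of "a @ butlast R" "last Q" "tl (rev Q)" b])
  have "(a @ butlast R) @ [last Q] @ b = a @ R @ b"
    using Rx Q(3) by (metis append.assoc append_Cons append_butlast_last_id list.distinct(1) self_append_conv2)
  then show ?thesis using rtranclp_trans[OF inserted retraced] by argo
qed

lemma homotopic_append_null:
  assumes s: "edge_path V adj s" and W: "edge_path V adj W" "hd W = last s"
    and null: "homotopic V adj Cells W [last s]"
  shows "homotopic V adj Cells (s @ tl W) s"
proof -
  have "s \<noteq> []" "W \<noteq> []" using s W by (simp_all add: edge_path_def)
  then have s_butlast: "s = butlast s @ [last s]" and W_Cons: "W = last s # tl W"
    using W(2) by (metis append_butlast_last_id, metis list.collapse)
  then have split: "s @ tl W = butlast s @ W @ []" by (metis append.assoc append_Cons append_Nil append_Nil2)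
  have "edge_path V adj (s @ tl W)" using edge_path_append_tl[OF s W(1)] W(2) by simp
  then have "homotopic V adj Cells (butlast s @ W @ []) (butlast s @ [last s] @ [])"
    unfolding split by (rule homotopic_in_context[OF null])
  then show ?thesis using split s_butlast by simp
qed

lemma null_homotopic_if_absorbed:
  assumes adj_sym: "\<And>x y. adj x y \<Longrightarrow> adj y x"
    and \<gamma>: "edge_path V adj \<gamma>" "hd \<gamma> = last \<gamma>" and s: "edge_path V adj s" "hd s = last \<gamma>"
    and absorbed: "homotopic V adj Cells (\<gamma> @ tl s) s"
  shows "homotopic V adj Cells \<gamma> [hd \<gamma>]"
proof -
  let ?x = "last \<gamma>"
  obtain s' where s': "s = ?x # s'" using s by (cases s) (auto simp: edge_path_def)
  have rev_s: "edge_path V adj (rev s)" using edge_path_rev[of adj V s] adj_sym s(1) by blast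
  have \<gamma>_butlast: "butlast \<gamma> @ [?x] = \<gamma>" using \<gamma>(1) by (simp add: edge_path_def)
  have "\<gamma> @ tl s @ tl (rev s) = (butlast \<gamma> @ [?x]) @ tl s @ tl (rev s)" using \<gamma>_butlast by simp
  also have "\<dots> = butlast \<gamma> @ (?x # s') @ tl (rev (?x # s')) @ []" using s' by simp
  finally have \<gamma>_split: "\<gamma> @ tl s @ tl (rev s) = butlast \<gamma> @ (?x # s') @ tl (rev (?x # s')) @ []" .
  have path_\<gamma>_s_back: "edge_path V adj (\<gamma> @ tl s @ tl (rev s))"
    using edge_path_append_tl[OF edge_path_append_tl[OF \<gamma>(1) s(1)] rev_s] s \<gamma>
    by (simp add: hd_rev last_rev edge_path_def)
  then have "homotopic V adj Cells (butlast \<gamma> @ (?x # s') @ tl (rev (?x # s')) @ []) (butlast \<gamma> @ [?x] @ [])"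
    unfolding \<gamma>_split by (rule homotopic_retrace)
  then have "homotopic V adj Cells \<gamma> (\<gamma> @ tl s @ tl (rev s))"
    using homotopic_sym \<gamma>_split \<gamma>_butlast by simp
  also have "homotopic V adj Cells (\<gamma> @ tl s @ tl (rev s)) (s @ tl (rev s))"
    using homotopic_in_context[OF absorbed, of "[]" "tl (rev s)"] path_\<gamma>_s_back by simp
  also have "homotopic V adj Cells (s @ tl (rev s)) [?x]"
    using homotopic_retrace[of "[]" ?x s' "[]"] edge_path_append_tl[OF s(1) rev_s] s'
    by (simp add: hd_rev)
  finally show ?thesis using \<gamma>(2) by simp
qed

end

fun path_image_from :: "('v \<Rightarrow> 'v \<Rightarrow> 'w list) \<Rightarrow> 'v \<Rightarrow> 'v list \<Rightarrow> 'w list" where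
  "path_image_from \<rho> x [] = []"
| "path_image_from \<rho> x (y # w) = tl (\<rho> x y) @ path_image_from \<rho> y w"

definition path_image :: "('v \<Rightarrow> 'w) \<Rightarrow> ('v \<Rightarrow> 'v \<Rightarrow> 'w list) \<Rightarrow> 'v list \<Rightarrow> 'w list" where
  "path_image F \<rho> w = (case w of [] \<Rightarrow> [] | x # w' \<Rightarrow> F x # path_image_from \<rho> x w')"

definition loop_image :: "('v \<Rightarrow> 'w) \<Rightarrow> ('v \<Rightarrow> 'v \<Rightarrow> 'w list) \<Rightarrow> 'v list \<Rightarrow> 'w list" where
  "loop_image F \<rho> c = butlast (path_image F \<rho> (c @ [hd c]))"

definition path_map ::
  "'v set \<Rightarrow> ('v \<Rightarrow> 'v \<Rightarrow> bool) \<Rightarrow> 'w set \<Rightarrow> ('w \<Rightarrow> 'w \<Rightarrow> bool) \<Rightarrow>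
    ('v \<Rightarrow> 'w) \<Rightarrow> ('v \<Rightarrow> 'v \<Rightarrow> 'w list) \<Rightarrow> bool"
where
  "path_map V adj V' adj' F \<rho> \<longleftrightarrow> F ` V \<subseteq> V' \<and>
     (\<forall>x y. \<rho> x y \<noteq> [] \<and> hd (\<rho> x y) = F x \<and> last (\<rho> x y) = F y) \<and>
     (\<forall>x\<in>V. \<forall>y\<in>V. adj x y \<longrightarrow> edge_path V' adj' (\<rho> x y))"

lemma path_image_Nil [simp]: "path_image F \<rho> [] = []"
  and path_image_Cons [simp]: "path_image F \<rho> (x # w) = F x # path_image_from \<rho> x w"
  by (simp_all add: path_image_def)

lemma path_image_eq_Nil_iff [simp]: "path_image F \<rho> w = [] \<longleftrightarrow> w = []"
  by (cases w) auto

lemma hd_path_image: "w \<noteq> [] \<Longrightarrow> hd (path_image F \<rho> w) = F (hd w)"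
  by (cases w) auto

lemma path_image_from_append:
  "path_image_from \<rho> x (a @ b) = path_image_from \<rho> x a @ path_image_from \<rho> (last (x # a)) b"
  by (induction a arbitrary: x) auto

lemma path_image_append_at:
  "path_image F \<rho> (a @ [x] @ b) = path_image F \<rho> (a @ [x]) @ path_image_from \<rho> x b"
  by (cases a) (auto simp: path_image_from_append)

lemma path_image_append_tl:
  assumes "p \<noteq> []" "q \<noteq> []" "last p = hd q"
  shows "path_image F \<rho> (p @ tl q) = path_image F \<rho> p @ tl (path_image F \<rho> q)"
proof -
  obtain p' q' where "p = p' @ [hd q]" "q = hd q # q'"
    using assms by (metis append_butlast_last_id list.collapse)
  then show ?thesis using path_image_append_at[of F \<rho> p' "hd q" q']
    by (metis list.sel(3) path_image_Cons append.assoc append_Cons append_Nil)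
qed

context
  fixes V :: "'v set" and adj and V' :: "'w set" and adj' and F and \<rho>
  assumes map: "path_map V adj V' adj' F \<rho>"
begin

lemma path_map_hd_last: "\<rho> x y = F x # tl (\<rho> x y)" "last (\<rho> x y) = F y"
  using map unfolding path_map_def by (metis list.collapse)+

lemma last_path_image_from: "last (F x # path_image_from \<rho> x w) = F (last (x # w))"
proof (induction w arbitrary: x)
  case (Cons y w)
  have "last (F x # tl (\<rho> x y)) = F y" using path_map_hd_last[of x y] by metis
  then show ?case using Cons.IH[of y] by (cases "path_image_from \<rho> y w = []") auto
qed simp

lemma last_path_image: "w \<noteq> [] \<Longrightarrow> last (path_image F \<rho> w) = F (last w)"
  by (cases w) (simp_all add: last_path_image_from del: last.simps)

lemma edge_path_path_image_from:
  "edge_path V adj (x # w) \<Longrightarrow> edge_path V' adj' (F x # path_image_from \<rho> x w)"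
proof (induction w arbitrary: x)
  case Nil
  then show ?case using map by (auto simp: path_map_def)
next
  case (Cons y w)
  have xy: "x \<in> V" "y \<in> V" "adj x y" "edge_path V adj (y # w)"
    using Cons.prems by (auto simp: edge_path_Cons_Cons edge_path_def)
  have "edge_path V' adj' (\<rho> x y)" using map xy by (simp add: path_map_def)
  moreover have "edge_path V' adj' (F y # path_image_from \<rho> y w)" using Cons.IH xy(4) .
  ultimately have "edge_path V' adj' (\<rho> x y @ tl (F y # path_image_from \<rho> y w))"
    using path_map_hd_last by (intro edge_path_append_tl) auto
  then show ?case using path_map_hd_last(1)[of x y] by (metis append_Cons list.sel(3) path_image_from.simps(2))
qed

lemma edge_path_path_image: "edge_path V adj w \<Longrightarrow> edge_path V' adj' (path_image F \<rho> w)"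
  using edge_path_path_image_from by (cases w) (auto simp: edge_path_def)

end

context
  fixes VH adjH CH VG adjG CG \<Psi> \<rho>
  assumes map: "path_map VH adjH VG adjG \<Psi> \<rho>"
    and cell_images: "\<And>c. edge_path VH adjH (c @ [hd c]) \<Longrightarrow> c \<in> CH \<or> length c = 2 \<Longrightarrow>
      loop_image \<Psi> \<rho> c \<noteq> [] \<Longrightarrow> loop_image \<Psi> \<rho> c \<in> CG"
    \<comment> \<open>the loops [u, v] of length 2 account for the backtracks u v u\<close>
begin

lemma homotopic_path_image_insert_loop:
  assumes path: "edge_path VH adjH (a @ (x # c) @ [x] @ b)" and c: "x # c \<in> CH \<or> length c = 1"
  shows "homotopic VG adjG CG (path_image \<Psi> \<rho> (a @ [x] @ b)) (path_image \<Psi> \<rho> (a @ (x # c) @ [x] @ b))"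
proof -
  have loop_path: "edge_path VH adjH (x # c @ [x])"
    using edge_path_infix[of VH adjH a "x # c @ [x]" b] path by simp
  have ea: "edge_path VH adjH (a @ [x] @ b)"
    using edge_path_replace_infix[of VH adjH a "x # c @ [x]" b "[x]"] path by (simp add: edge_path_def)
  define A where "A = butlast (path_image \<Psi> \<rho> (a @ [x]))"
  define D where "D = path_image_from \<rho> x (c @ [x])"
  have A: "path_image \<Psi> \<rho> (a @ [x]) = A @ [\<Psi> x]"
    unfolding A_def using last_path_image[OF map, of "a @ [x]"]
    by (metis append_butlast_last_id path_image_eq_Nil_iff snoc_eq_iff_butlast last_snoc)
  have short: "path_image \<Psi> \<rho> (a @ [x] @ b) = A @ [\<Psi> x] @ path_image_from \<rho> x b"
    using A path_image_append_at[of \<Psi> \<rho> a x b] by simp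
  have long: "path_image \<Psi> \<rho> (a @ (x # c) @ [x] @ b) = A @ [\<Psi> x] @ D @ path_image_from \<rho> x b"
    using path_image_append_at[of \<Psi> \<rho> "a @ x # c" x b] path_image_append_at[of \<Psi> \<rho> a x "c @ [x]"] A
    unfolding D_def by (simp add: path_image_from_append)
  show ?thesis
  proof (cases "D = []")
    case True
    then show ?thesis using short long by simp
  next
    case False
    have "last (\<Psi> x # D) = \<Psi> x" using last_path_image_from[OF map, of x "c @ [x]"] unfolding D_def by simp
    then have D: "D = butlast D @ [\<Psi> x]" using False by (metis append_butlast_last_id last_ConsR)
    have "loop_image \<Psi> \<rho> (x # c) = \<Psi> x # butlast D"
      unfolding loop_image_def D_def using False D_def by (simp add: butlast_append)
    then have cell: "\<Psi> x # butlast D \<in> CG"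
      using cell_images[of "x # c"] c loop_path by fastforce
    have "edge_path VG adjG (A @ [hd (\<Psi> x # butlast D)] @ path_image_from \<rho> x b)"
      using edge_path_path_image[OF map ea] short by simp
    then have "htpy_step VG adjG CG (A @ [\<Psi> x] @ path_image_from \<rho> x b)
        (A @ (\<Psi> x # butlast D) @ [\<Psi> x] @ path_image_from \<rho> x b)"
      using htpy_step.cell[OF cell] by simp
    moreover have "path_image \<Psi> \<rho> (a @ (x # c) @ [x] @ b) =
        A @ [\<Psi> x] @ (butlast D @ [\<Psi> x]) @ path_image_from \<rho> x b"
      using long D by argo
    ultimately show ?thesis using short by (simp add: r_into_rtranclp)
  qed
qed

lemma homotopic_path_image:
  assumes cellsH: "\<forall>c\<in>CH. edge_loop VH adjH c" and "homotopic VH adjH CH p q"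
  shows "homotopic VG adjG CG (path_image \<Psi> \<rho> p) (path_image \<Psi> \<rho> q)"
proof -
  have single_step: "homotopic VG adjG CG (path_image \<Psi> \<rho> p) (path_image \<Psi> \<rho> q)"
    if "htpy_step VH adjH CH p q" for p q
    using that
  proof cases
    case (backtrack p' u v q')
    have "homotopic VG adjG CG (path_image \<Psi> \<rho> (p' @ [u] @ q')) (path_image \<Psi> \<rho> (p' @ [u, v] @ [u] @ q'))"
      using homotopic_path_image_insert_loop[of p' u "[v]" q'] backtrack by simp
    then show ?thesis using backtrack homotopic_sym by simp
  next
    case (cell c p' q')
    have "edge_loop VH adjH c" using cellsH cell(3) by blast
    then obtain x c' where "c = x # c'" "edge_path VH adjH (p' @ (x # c') @ [x] @ q')"
      using edge_path_insert_loop[OF cell(4)] by (cases c) (auto simp: edge_loop_iff)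
    then show ?thesis using homotopic_path_image_insert_loop[of p' x c' q'] cell by simp
  qed
  from assms(2) show ?thesis
  proof (induction rule: rtranclp_induct)
    case (step y z)
    have "homotopic VG adjG CG (path_image \<Psi> \<rho> y) (path_image \<Psi> \<rho> z)"
      using step.hyps(2) single_step homotopic_sym by blast
    with step.IH show ?case by (rule rtranclp_trans)
  qed simp
qed

end

section \<open>Retractions of 2-complexes\<close>

(* The boundary of the square with corners x, z, \<Psi> (\<Phi> z), \<Psi> (\<Phi> x): the edge x z, the rung \<sigma> z,
   then backwards along the image W [x, z] of the edge and the rung \<sigma> x. *)
definition ladder_cell :: "('v \<Rightarrow> 'v list) \<Rightarrow> ('v list \<Rightarrow> 'v list) \<Rightarrow> 'v \<Rightarrow> 'v \<Rightarrow> 'v list" where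
  "ladder_cell \<sigma> W x z = butlast ((x # \<sigma> z) @ tl (rev (\<sigma> x @ tl (W [x, z]))))"

context
  fixes VG :: "'v set" and adjG and CG and VH :: "'w set" and adjH and \<Phi> \<tau> \<Psi> \<rho> \<sigma>
  assumes adjG_sym: "\<And>x y. adjG x y \<Longrightarrow> adjG y x"
    and cellsG: "\<forall>c\<in>CG. edge_loop VG adjG c"
    and \<Phi>_map: "path_map VG adjG VH adjH \<Phi> \<tau>"
    and \<Psi>_map: "path_map VH adjH VG adjG \<Psi> \<rho>"
    and \<sigma>_path: "\<And>v. v \<in> VG \<Longrightarrow>
      edge_path VG adjG (\<sigma> v) \<and> hd (\<sigma> v) = v \<and> last (\<sigma> v) = \<Psi> (\<Phi> v)"
    and ladder_cells: "\<And>x z. x \<in> VG \<Longrightarrow> z \<in> VG \<Longrightarrow> adjG x z \<Longrightarrow>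
      ladder_cell \<sigma> (path_image \<Psi> \<rho> \<circ> path_image \<Phi> \<tau>) x z \<in> CG"
begin

abbreviation round_trip :: "'v list \<Rightarrow> 'v list" where
  "round_trip p \<equiv> path_image \<Psi> \<rho> (path_image \<Phi> \<tau> p)"

lemma edge_path_round_trip:
  assumes "edge_path VG adjG p"
  shows "edge_path VG adjG (round_trip p)" "hd (round_trip p) = \<Psi> (\<Phi> (hd p))"
    "last (round_trip p) = \<Psi> (\<Phi> (last p))"
  using assms edge_path_path_image[OF \<Phi>_map] edge_path_path_image[OF \<Psi>_map]
    last_path_image[OF \<Phi>_map] last_path_image[OF \<Psi>_map]
  by (auto simp: hd_path_image edge_path_def)

lemma round_trip_Cons_Cons: "round_trip (x # z # w) = round_trip [x, z] @ tl (round_trip (z # w))"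
proof -
  have "path_image \<Phi> \<tau> (x # z # w) = path_image \<Phi> \<tau> [x, z] @ tl (path_image \<Phi> \<tau> (z # w))"
    by simp
  moreover have "last (path_image \<Phi> \<tau> [x, z]) = hd (path_image \<Phi> \<tau> (z # w))"
    using last_path_image[OF \<Phi>_map, of "[x, z]"] by simp
  ultimately show ?thesis by (simp add: path_image_append_tl del: path_image_Cons)
qed

lemma homotopic_ladder:
  "edge_path VG adjG (x # w) \<Longrightarrow>
    homotopic VG adjG CG (x # w @ tl (\<sigma> (last (x # w)))) (\<sigma> x @ tl (round_trip (x # w)))"
proof (induction w arbitrary: x)
  case Nil
  then have "\<sigma> x = x # tl (\<sigma> x)" using \<sigma>_path[of x] by (metis edge_path_def edge_path_singleton list.collapse)
  then show ?case by simp
next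
  case (Cons z w)
  have xz: "x \<in> VG" "z \<in> VG" "adjG x z" and path_zw: "edge_path VG adjG (z # w)"
    using Cons.prems by (auto simp: edge_path_Cons_Cons edge_path_def)
  let ?l = "last (z # w)"
  have "?l \<in> VG" using path_zw by (auto simp: edge_path_def)
  then have "edge_path VG adjG ([x] @ (z # w @ tl (\<sigma> ?l)) @ [])"
    using edge_path_append_tl[OF Cons.prems, of "\<sigma> ?l"] \<sigma>_path by simp
  then have "homotopic VG adjG CG ([x] @ (z # w @ tl (\<sigma> ?l)) @ []) ([x] @ (\<sigma> z @ tl (round_trip (z # w))) @ [])"
    by (rule homotopic_in_context[OF cellsG Cons.IH[OF path_zw]])
  then have step_along_edge: "homotopic VG adjG CG (x # z # w @ tl (\<sigma> ?l)) ([x] @ \<sigma> z @ tl (round_trip (z # w)))"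
    by simp
  define Q where "Q = \<sigma> x @ tl (round_trip [x, z])"
  define R where "R = x # \<sigma> z"
  have path_xz: "edge_path VG adjG [x, z]" using xz by (simp add: edge_path_Cons_Cons)
  have RT: "edge_path VG adjG (round_trip [x, z])" "hd (round_trip [x, z]) = \<Psi> (\<Phi> x)"
      "last (round_trip [x, z]) = \<Psi> (\<Phi> z)"
    using edge_path_round_trip[OF path_xz] by simp_all
  have \<sigma>x: "edge_path VG adjG (\<sigma> x)" "hd (\<sigma> x) = x" "last (\<sigma> x) = \<Psi> (\<Phi> x)"
    using \<sigma>_path[OF xz(1)] by simp_all
  have Q: "edge_path VG adjG Q" "hd Q = x" "last Q = \<Psi> (\<Phi> z)"
    unfolding Q_def using edge_path_append_tl[OF \<sigma>x(1) RT(1)] last_append_tl[of "round_trip [x, z]" "\<sigma> x"]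
      \<sigma>x RT by (auto simp: edge_path_def simp del: path_image_Cons)
  have R: "edge_path VG adjG R" "length R \<ge> 2" "hd R = x" "last R = \<Psi> (\<Phi> z)"
    unfolding R_def using \<sigma>_path[OF xz(2)] xz edge_path_appendI[of VG adjG "[x]" "\<sigma> z"]
    by (auto simp: edge_path_def Suc_le_eq)
  have QR_cell: "butlast (R @ tl (rev Q)) \<in> CG"
    using ladder_cells[OF xz] unfolding ladder_cell_def Q_def R_def by simp
  have Q_suffix: "Q @ tl (round_trip (z # w)) = \<sigma> x @ tl (round_trip (x # z # w))"
    unfolding Q_def round_trip_Cons_Cons[of x z w] by (simp del: path_image_Cons)
  have "edge_path VG adjG (\<sigma> x @ tl (round_trip (x # z # w)))"
    using edge_path_append_tl[OF \<sigma>x(1) edge_path_round_trip(1)[OF Cons.prems]]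
      edge_path_round_trip(2)[OF Cons.prems] \<sigma>x(3) by (simp del: path_image_Cons)
  then have "homotopic VG adjG CG ([] @ Q @ tl (round_trip (z # w))) ([] @ R @ tl (round_trip (z # w)))"
    unfolding Q_suffix[symmetric]
    by (intro homotopic_across_cell[OF cellsG R(1,2) Q(1) _ _ QR_cell]) (simp_all add: Q R)
  then have across: "homotopic VG adjG CG (R @ tl (round_trip (z # w))) (\<sigma> x @ tl (round_trip (x # z # w)))"
    using homotopic_sym Q_suffix by simp
  have "x # (z # w) @ tl (\<sigma> (last (x # z # w))) = x # z # w @ tl (\<sigma> ?l)" by simp
  also have "homotopic VG adjG CG \<dots> (R @ tl (round_trip (z # w)))"
    using step_along_edge unfolding R_def by simp
  also note across
  finally show ?case .
qed

lemma null_homotopic_by_retraction: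
  assumes cellsH: "\<forall>c\<in>CH. edge_loop VH adjH c"
    and H_simply_connected: "\<And>p. edge_path VH adjH p \<Longrightarrow> hd p = last p \<Longrightarrow> homotopic VH adjH CH p [hd p]"
    and cell_images: "\<And>c. edge_path VH adjH (c @ [hd c]) \<Longrightarrow> c \<in> CH \<or> length c = 2 \<Longrightarrow>
      loop_image \<Psi> \<rho> c \<noteq> [] \<Longrightarrow> loop_image \<Psi> \<rho> c \<in> CG"
    and \<gamma>: "edge_path VG adjG \<gamma>" "hd \<gamma> = last \<gamma>"
  shows "homotopic VG adjG CG \<gamma> [hd \<gamma>]"
proof -
  obtain x w where \<gamma>_x: "\<gamma> = x # w" using \<gamma> by (cases \<gamma>) (auto simp: edge_path_def)
  have x: "x \<in> VG" "last \<gamma> = x" using \<gamma> \<gamma>_x by (auto simp: edge_path_def)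
  \<comment> \<open>\<gamma> followed by the rung s at its base point is homotopic, rung by rung, to s followed by
    the round trip of \<gamma>, which is null-homotopic because its image in H is\<close>
  define s where "s = \<sigma> x"
  have s: "edge_path VG adjG s" "hd s = x" "last s = \<Psi> (\<Phi> x)" using \<sigma>_path[OF x(1)] s_def by auto
  have ladder: "homotopic VG adjG CG (\<gamma> @ tl s) (s @ tl (round_trip \<gamma>))"
    using homotopic_ladder[of x w] \<gamma> \<gamma>_x x unfolding s_def by simp
  have "edge_path VH adjH (path_image \<Phi> \<tau> \<gamma>)" by (rule edge_path_path_image[OF \<Phi>_map \<gamma>(1)])
  moreover have "hd (path_image \<Phi> \<tau> \<gamma>) = \<Phi> x" "last (path_image \<Phi> \<tau> \<gamma>) = \<Phi> x"
    using hd_path_image[of \<gamma>] last_path_image[OF \<Phi>_map, of \<gamma>] \<gamma>_x x(2) by auto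
  ultimately have "homotopic VH adjH CH (path_image \<Phi> \<tau> \<gamma>) [\<Phi> x]"
    using H_simply_connected[of "path_image \<Phi> \<tau> \<gamma>"] by simp
  then have round_trip_null: "homotopic VG adjG CG (round_trip \<gamma>) [\<Psi> (\<Phi> x)]"
    using homotopic_path_image[OF \<Psi>_map cell_images cellsH] by fastforce
  have "hd \<gamma> = x" using \<gamma>_x by simp
  then have "hd (round_trip \<gamma>) = last s" using edge_path_round_trip(2)[OF \<gamma>(1)] s(3) by simp
  then have "homotopic VG adjG CG (s @ tl (round_trip \<gamma>)) s"
    using homotopic_append_null[OF cellsG s(1) edge_path_round_trip(1)[OF \<gamma>(1)]] round_trip_null s(3) by simp
  with ladder have "homotopic VG adjG CG (\<gamma> @ tl s) s" by (rule rtranclp_trans)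
  then show ?thesis using null_homotopic_if_absorbed[OF cellsG adjG_sym \<gamma> s(1)] s(2) x(2) by simp
qed

end

section \<open>Coned-off Cayley graphs\<close>

definition cone_count :: "('a + 'b) list \<Rightarrow> nat" where
  "cone_count w = length (filter is_cone_vertex w)"

lemma cone_count_simps [simp]:
  "cone_count [] = 0"
  "cone_count (x # w) = (if is_cone_vertex x then 1 else 0) + cone_count w"
  "cone_count (u @ w) = cone_count u + cone_count w"
  "cone_count (rev w) = cone_count w"
  by (auto simp: cone_count_def rev_filter[symmetric])

lemma unicone_iff_cone_count: "unicone c \<longleftrightarrow> cone_count c \<le> 1"
  by (simp add: unicone_def cone_count_def)

lemma is_cone_vertex_map_sum [simp]: "is_cone_vertex (map_sum f g v) = is_cone_vertex v"
  by (cases v) (auto simp: is_cone_vertex_def)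

definition bounded_edge_images :: "nat \<Rightarrow> ('a + 'b \<Rightarrow> 'a + 'b \<Rightarrow> ('c + 'd) list) \<Rightarrow> bool" where
  "bounded_edge_images K \<rho> \<longleftrightarrow>
     (\<forall>x y. length (tl (\<rho> x y)) \<le> K \<and> cone_count (tl (\<rho> x y)) \<le> cone_count [y])"

lemma length_path_image_from:
  "bounded_edge_images K \<rho> \<Longrightarrow> length (path_image_from \<rho> x w) \<le> K * length w"
proof (induction w arbitrary: x)
  case (Cons y w)
  have "length (tl (\<rho> x y)) \<le> K" using Cons.prems by (simp add: bounded_edge_images_def)
  then show ?case using Cons.IH[OF Cons.prems, of y] by simp
qed simp

lemma cone_count_path_image_from:
  "bounded_edge_images K \<rho> \<Longrightarrow> cone_count (path_image_from \<rho> x w) \<le> cone_count w"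
proof (induction w arbitrary: x)
  case (Cons y w)
  then show ?case using Cons.IH[of y] unfolding bounded_edge_images_def
    by (metis add_mono cone_count_simps(1,2,3) add_0_right path_image_from.simps(2))
qed simp

lemma loop_image_snoc:
  assumes "path_map V adj V' adj' F \<rho>" "c \<noteq> []"
  shows "loop_image F \<rho> c @ [F (hd c)] = path_image F \<rho> (c @ [hd c])"
  using last_path_image[OF assms(1), of "c @ [hd c]"] append_butlast_last_id[of "path_image F \<rho> (c @ [hd c])"]
  unfolding loop_image_def by simp

lemma edge_loop_loop_image:
  assumes map: "path_map V adj V' adj' F \<rho>"
    and "edge_path V adj (c @ [hd c])" "loop_image F \<rho> c \<noteq> []"
  shows "edge_loop V' adj' (loop_image F \<rho> c)"
proof -
  have "c \<noteq> []" using assms(3) by (auto simp: loop_image_def)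
  then have snoc: "loop_image F \<rho> c @ [F (hd c)] = path_image F \<rho> (c @ [hd c])"
    by (rule loop_image_snoc[OF map])
  then have "hd (loop_image F \<rho> c) = F (hd c)"
    using hd_path_image[of "c @ [hd c]" F \<rho>] assms(3) \<open>c \<noteq> []\<close> by (metis hd_append2 hd_append snoc_eq_iff_butlast)
  then show ?thesis
    using snoc edge_path_path_image[OF map assms(2)] assms(3) by (simp add: edge_loop_iff)
qed

lemma length_loop_image:
  assumes "bounded_edge_images K \<rho>"
  shows "length (loop_image F \<rho> c) \<le> K * length c"
proof (cases c)
  case (Cons x c')
  then show ?thesis using length_path_image_from[OF assms, of x "c' @ [x]"]
    by (simp add: loop_image_def)
qed (simp add: loop_image_def)

lemma cone_count_loop_image:
  assumes map: "path_map V adj V' adj' F \<rho>" and bounded: "bounded_edge_images K \<rho>"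
    and F_cones: "\<And>v. is_cone_vertex (F v) = is_cone_vertex v"
  shows "cone_count (loop_image F \<rho> c) \<le> cone_count c"
proof (cases c)
  case (Cons x c')
  have "cone_count (loop_image F \<rho> c @ [F x]) = cone_count (F x # path_image_from \<rho> x (c' @ [x]))"
    using loop_image_snoc[OF map, of c] Cons by simp
  then show ?thesis
    using cone_count_path_image_from[OF bounded, of x "c' @ [x]"] Cons F_cones by simp
qed (simp add: loop_image_def)

lemma edge_loop_butlast_append_rev:
  assumes adj_sym: "\<And>x y. adj x y \<Longrightarrow> adj y x"
    and R: "edge_path V adj R" "length R \<ge> 2" and Q: "edge_path V adj Q"
    and ends: "hd R = hd Q" "last R = last Q"
  shows "edge_loop V adj (butlast (R @ tl (rev Q)))" "butlast (R @ tl (rev Q)) @ [hd R] = R @ tl (rev Q)"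
proof -
  let ?X = "R @ tl (rev Q)"
  have "Q \<noteq> []" using Q by (simp add: edge_path_def)
  have "edge_path V adj (rev Q)" using edge_path_rev[of adj V Q] adj_sym Q by blast
  then have X: "edge_path V adj ?X" using edge_path_append_tl[OF R(1)] ends by (simp add: hd_rev)
  have "last ?X = hd R"
    using ends \<open>Q \<noteq> []\<close> last_append_tl[of "rev Q" R] by (simp add: hd_rev last_rev)
  moreover have "?X \<noteq> []" using R(2) by auto
  ultimately show X_snoc: "butlast ?X @ [hd R] = ?X" by (metis append_butlast_last_id)
  have "butlast ?X \<noteq> []" "hd (butlast ?X) = hd R"
    using R(2) by (cases R; cases "tl R"; simp add: butlast_append)+
  then show "edge_loop V adj (butlast ?X)" using X X_snoc by (simp add: edge_loop_iff)
qed

lemma path_image_edge_bounds: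
  assumes \<Phi>_map: "path_map VG adjG VH adjH \<Phi> \<tau>" and \<Psi>_map: "path_map VH adjH VG adjG \<Psi> \<rho>"
    and bounded: "bounded_edge_images K \<tau>" "bounded_edge_images K \<rho>"
    and xz: "x \<in> VG" "z \<in> VG" "adjG x z"
  defines "W \<equiv> path_image \<Psi> \<rho> (path_image \<Phi> \<tau> [x, z])"
  shows "edge_path VG adjG W" "hd W = \<Psi> (\<Phi> x)" "last W = \<Psi> (\<Phi> z)"
    "length (tl W) \<le> K * K" "cone_count (tl W) \<le> cone_count [z]"
proof -
  have "edge_path VG adjG [x, z]" using xz by (simp add: edge_path_Cons_Cons)
  then show "edge_path VG adjG W" "hd W = \<Psi> (\<Phi> x)" "last W = \<Psi> (\<Phi> z)"
    unfolding W_def using edge_path_path_image[OF \<Psi>_map edge_path_path_image[OF \<Phi>_map]]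
      last_path_image[OF \<Psi>_map, of "path_image \<Phi> \<tau> [x, z]"] last_path_image[OF \<Phi>_map, of "[x, z]"]
    by (simp_all del: path_image_Cons add: hd_path_image)
  have tl_W: "tl W = path_image_from \<rho> (\<Phi> x) (tl (\<tau> x z))" by (simp add: W_def)
  have \<tau>_short: "length (tl (\<tau> x z)) \<le> K" "cone_count (tl (\<tau> x z)) \<le> cone_count [z]"
    using bounded(1) unfolding bounded_edge_images_def by blast+
  show "length (tl W) \<le> K * K"
    using length_path_image_from[OF bounded(2), of "\<Phi> x" "tl (\<tau> x z)"] mult_le_mono2[OF \<tau>_short(1), of K]
    unfolding tl_W by linarith
  show "cone_count (tl W) \<le> cone_count [z]"
    using cone_count_path_image_from[OF bounded(2), of "\<Phi> x" "tl (\<tau> x z)"] \<tau>_short(2)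
    unfolding tl_W by linarith
qed

lemma ladder_cell_bounds:
  assumes adjG_sym: "\<And>x y. adjG x y \<Longrightarrow> adjG y x"
    and cones_apart: "\<And>x y. adjG x y \<Longrightarrow> is_cone_vertex x \<Longrightarrow> \<not> is_cone_vertex y"
    and \<Phi>_map: "path_map VG adjG VH adjH \<Phi> \<tau>" and \<Psi>_map: "path_map VH adjH VG adjG \<Psi> \<rho>"
    and \<Phi>_cones: "\<And>v. is_cone_vertex (\<Phi> v) = is_cone_vertex v"
    and \<Psi>_cones: "\<And>v. is_cone_vertex (\<Psi> v) = is_cone_vertex v"
    and bounded: "bounded_edge_images K \<tau>" "bounded_edge_images K \<rho>"
    and \<sigma>: "\<And>v. v \<in> VG \<Longrightarrow>
      edge_path VG adjG (\<sigma> v) \<and> hd (\<sigma> v) = v \<and> last (\<sigma> v) = \<Psi> (\<Phi> v) \<and>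
      length (\<sigma> v) \<le> K \<and> cone_count (\<sigma> v) = cone_count [v]"
    and xz: "x \<in> VG" "z \<in> VG" "adjG x z"
  shows "edge_loop VG adjG (ladder_cell \<sigma> (path_image \<Psi> \<rho> \<circ> path_image \<Phi> \<tau>) x z) \<and>
    unicone (ladder_cell \<sigma> (path_image \<Psi> \<rho> \<circ> path_image \<Phi> \<tau>) x z) \<and>
    length (ladder_cell \<sigma> (path_image \<Psi> \<rho> \<circ> path_image \<Phi> \<tau>) x z) < (K + 1) * (K + 1)"
proof -
  define W where "W = path_image \<Psi> \<rho> (path_image \<Phi> \<tau> [x, z])"
  define Q where "Q = \<sigma> x @ tl W"
  define R where "R = x # \<sigma> z"
  note W = path_image_edge_bounds[OF \<Phi>_map \<Psi>_map bounded xz, folded W_def]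
  have \<sigma>x: "edge_path VG adjG (\<sigma> x)" "hd (\<sigma> x) = x" "last (\<sigma> x) = \<Psi> (\<Phi> x)" "length (\<sigma> x) \<le> K"
      "cone_count (\<sigma> x) = cone_count [x]"
    using \<sigma>[OF xz(1)] by simp_all
  have \<sigma>z: "edge_path VG adjG (\<sigma> z)" "hd (\<sigma> z) = z" "last (\<sigma> z) = \<Psi> (\<Phi> z)" "length (\<sigma> z) \<le> K"
      "cone_count (\<sigma> z) = cone_count [z]"
    using \<sigma>[OF xz(2)] by simp_all
  have Q: "edge_path VG adjG Q" "Q \<noteq> []" "hd Q = x" "last Q = \<Psi> (\<Phi> z)"
    unfolding Q_def using edge_path_append_tl[OF \<sigma>x(1) W(1)] last_append_tl[of W "\<sigma> x"] \<sigma>x W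
    by (auto simp: edge_path_def)
  have R: "edge_path VG adjG R" "length R \<ge> 2" "hd R = x" "last R = \<Psi> (\<Phi> z)"
    unfolding R_def using \<sigma>z xz edge_path_appendI[of VG adjG "[x]" "\<sigma> z"]
    by (auto simp: edge_path_def Suc_le_eq)
  define X where "X = R @ tl (rev Q)"
  have cell: "ladder_cell \<sigma> (path_image \<Psi> \<rho> \<circ> path_image \<Phi> \<tau>) x z = butlast X"
    unfolding ladder_cell_def X_def R_def Q_def W_def by simp
  have "hd R = hd Q" "last R = last Q" using Q R by simp_all
  note X_loop = edge_loop_butlast_append_rev[OF adjG_sym R(1,2) Q(1) this, folded X_def]
  have loop: "edge_loop VG adjG (butlast X)" by (rule X_loop(1))
  have X_snoc: "butlast X @ [x] = X" using X_loop(2) R(3) by simp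
  have rev_Q: "rev Q = \<Psi> (\<Phi> z) # tl (rev Q)" using Q by (metis hd_rev list.collapse rev_is_Nil_conv)
  have "length Q \<le> K + K * K" using W(4) \<sigma>x(4) by (simp add: Q_def)
  moreover have "length R \<le> K + 1" using \<sigma>z(4) by (simp add: R_def)
  moreover have "length (butlast X) + 1 = length R + length Q - 1"
    using arg_cong[OF X_snoc, of length] Q(2) unfolding X_def by (cases Q) auto
  ultimately have short: "length (butlast X) < (K + 1) * (K + 1)" by (simp add: algebra_simps)
  have "cone_count Q \<le> cone_count [x] + cone_count [z]" using W(5) \<sigma>x(5) by (simp add: Q_def)
  moreover have "cone_count Q = cone_count [z] + cone_count (tl (rev Q))"
    using arg_cong[OF rev_Q, of cone_count] \<Psi>_cones \<Phi>_cones by simp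
  moreover have "cone_count (butlast X) + cone_count [x] = cone_count [x] + cone_count [z] + cone_count (tl (rev Q))"
    using arg_cong[OF X_snoc, of cone_count] \<sigma>z(5) unfolding X_def R_def by simp
  ultimately have "cone_count (butlast X) \<le> 1"
    using cones_apart[OF xz(3)] by (auto split: if_splits)
  then show ?thesis using loop short cell by (simp add: unicone_iff_cone_count)
qed

lemma Inl_in_cone_vertices [simp]: "Inl g \<in> cone_vertices G I P \<longleftrightarrow> g \<in> carrier G"
  and Inr_in_cone_vertices [simp]: "Inr A \<in> cone_vertices G I P \<longleftrightarrow> A \<in> cosets_pair G I P"
  by (auto simp: cone_vertices_def)

lemma cone_adj_sym: "cone_adj G S x y \<Longrightarrow> cone_adj G S y x"
  by (auto simp: cone_adj_def split: sum.splits)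

lemma cone_adj_cone_vertex: "cone_adj G S x y \<Longrightarrow> is_cone_vertex x \<Longrightarrow> \<not> is_cone_vertex y"
  by (auto simp: cone_adj_def is_cone_vertex_def split: sum.splits)

lemma cosets_pair_subset_carrier:
  assumes "group_pair G I P" "A \<in> cosets_pair G I P"
  shows "snd A \<subseteq> carrier G" "snd A \<noteq> {}"
proof -
  interpret G: group G using assms by (simp add: group_pair_def)
  obtain i x where A: "A = (i, x <#\<^bsub>G\<^esub> P i)" "i \<in> I" "x \<in> carrier G"
    using assms(2) by (auto simp: cosets_pair_def)
  have sub: "subgroup (P i) G" using assms(1) A by (simp add: group_pair_def)
  then have "P i \<subseteq> carrier G" by (rule subgroup.subset)
  then show "snd A \<subseteq> carrier G" using A G.l_coset_subset_G by simp
  have "x \<otimes>\<^bsub>G\<^esub> \<one>\<^bsub>G\<^esub> \<in> x <#\<^bsub>G\<^esub> P i"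
    unfolding l_coset_def using sub by (auto intro: subgroup.one_closed)
  then show "snd A \<noteq> {}" using A by auto
qed

abbreviation word_product :: "('a, 'c) monoid_scheme \<Rightarrow> 'a list \<Rightarrow> 'a" where
  "word_product G w \<equiv> foldr (\<lambda>a b. a \<otimes>\<^bsub>G\<^esub> b) w \<one>\<^bsub>G\<^esub>"

abbreviation letters :: "('a, 'c) monoid_scheme \<Rightarrow> 'a set \<Rightarrow> 'a set" where
  "letters G S \<equiv> S \<union> (\<lambda>s. inv\<^bsub>G\<^esub> s) ` S"

context group
begin

lemma word_product_closed: "set w \<subseteq> carrier G \<Longrightarrow> word_product G w \<in> carrier G"
  by (induction w) auto

lemma word_product_append:
  "set u \<subseteq> carrier G \<Longrightarrow> set w \<subseteq> carrier G \<Longrightarrow>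
    word_product G (u @ w) = word_product G u \<otimes> word_product G w"
  by (induction u) (auto simp: m_assoc word_product_closed)

lemma generate_word:
  assumes "S \<subseteq> carrier G" "x \<in> generate G S"
  shows "\<exists>w. set w \<subseteq> letters G S \<and> word_product G w = x"
  using assms(2)
proof (induction rule: generate.induct)
  case one
  show ?case by (intro exI[of _ "[]"]) simp
next
  case (incl h)
  then show ?case using assms(1) by (intro exI[of _ "[h]"]) auto
next
  case (inv h)
  then show ?case using assms(1) by (intro exI[of _ "[inv h]"]) auto
next
  case (eng h1 h2)
  then obtain w1 w2 where "set w1 \<subseteq> letters G S" "word_product G w1 = h1"
    "set w2 \<subseteq> letters G S" "word_product G w2 = h2" by blast
  moreover have "letters G S \<subseteq> carrier G" using assms(1) by auto
  ultimately have "set (w1 @ w2) \<subseteq> letters G S" "word_product G (w1 @ w2) = h1 \<otimes> h2"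
    using word_product_append[of w1 w2] by auto
  then show ?case by blast
qed

lemma cone_adj_letter:
  assumes "S \<subseteq> carrier G" "g \<in> carrier G" "s \<in> letters G S"
  shows "cone_adj G S (Inl g) (Inl (g \<otimes> s))"
proof -
  have s: "s \<in> carrier G" using assms by auto
  have "inv g \<otimes> (g \<otimes> s) = s" using assms(2) s by (simp add: m_assoc[symmetric])
  moreover have "inv (g \<otimes> s) \<otimes> g = inv s" using assms(2) s by (simp add: inv_mult_group m_assoc)
  ultimately show ?thesis using assms(1,3) by (auto simp: cone_adj_def)
qed

lemma word_edge_path:
  assumes "S \<subseteq> carrier G" "g \<in> carrier G" "set w \<subseteq> letters G S"
  shows "\<exists>p. edge_path (cone_vertices G I P) (cone_adj G S) p \<and> hd p = Inl g \<and>
    last p = Inl (g \<otimes> word_product G w) \<and> length p = Suc (length w) \<and> cone_count p = 0"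
  using assms(2,3)
proof (induction w arbitrary: g)
  case Nil
  then show ?case by (intro exI[of _ "[Inl g]"]) (simp add: is_cone_vertex_def)
next
  case (Cons s w)
  have s: "s \<in> letters G S" "s \<in> carrier G" and w: "set w \<subseteq> letters G S" "set w \<subseteq> carrier G"
    using Cons.prems assms(1) by auto
  obtain p where p: "edge_path (cone_vertices G I P) (cone_adj G S) p" "hd p = Inl (g \<otimes> s)"
    "last p = Inl (g \<otimes> s \<otimes> word_product G w)" "length p = Suc (length w)" "cone_count p = 0"
    using Cons.IH[OF _ w(1)] Cons.prems(1) s(2) by blast
  have "edge_path (cone_vertices G I P) (cone_adj G S) ([Inl g] @ p)"
    using edge_path_appendI[of "cone_vertices G I P" "cone_adj G S" "[Inl g]" p] p(1,2) cone_adj_letter[OF assms(1) Cons.prems(1) s(1)]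
      Cons.prems(1) by simp
  moreover have "g \<otimes> s \<otimes> word_product G w = g \<otimes> word_product G (s # w)"
    using Cons.prems(1) s(2) word_product_closed[OF w(2)] by (simp add: m_assoc)
  ultimately show ?case using p by (intro exI[of _ "Inl g # p"]) (auto simp: is_cone_vertex_def edge_path_def)
qed

lemma word_dist_edge_path:
  assumes "fin_gen_set G S" "g \<in> carrier G" "g' \<in> carrier G"
  shows "\<exists>p. edge_path (cone_vertices G I P) (cone_adj G S) p \<and> hd p = Inl g \<and> last p = Inl g' \<and>
    length p = Suc (word_dist G S g g') \<and> cone_count p = 0"
proof -
  have S: "S \<subseteq> carrier G" using assms(1) by (simp add: fin_gen_set_def)
  let ?x = "inv g \<otimes> g'"
  let ?spells = "\<lambda>n. \<exists>w. length w = n \<and> set w \<subseteq> letters G S \<and> word_product G w = ?x"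
  have "\<exists>n. ?spells n" using generate_word[OF S] assms by (simp add: fin_gen_set_def)
  then have "?spells (LEAST n. ?spells n)" by (rule LeastI_ex)
  then obtain w where w: "length w = word_dist G S g g'" "set w \<subseteq> letters G S" "word_product G w = ?x"
    unfolding word_dist_def word_length_def by blast
  have "g \<otimes> ?x = g'" using assms(2,3) by (simp add: m_assoc[symmetric])
  then show ?thesis using word_edge_path[OF S assms(2) w(2), of I P] w(1,3) by auto
qed

lemma word_dist_le_1_if_cone_adj:
  assumes "g \<in> carrier G" "g' \<in> carrier G" "cone_adj G S (Inl g) (Inl g')"
  shows "word_dist G S g g' \<le> 1"
proof -
  have "inv (inv g' \<otimes> g) = inv g \<otimes> g'" using assms(1,2) by (simp add: inv_mult_group)
  moreover have "inv g \<otimes> g' \<in> S \<or> inv g' \<otimes> g \<in> S" using assms(3) by (simp add: cone_adj_def)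
  ultimately have "inv g \<otimes> g' \<in> letters G S" by (metis UnI1 UnI2 image_eqI)
  then have "\<exists>w. length w = 1 \<and> set w \<subseteq> letters G S \<and> word_product G w = inv g \<otimes> g'"
    using assms(1,2) by (intro exI[of _ "[inv g \<otimes> g']"]) auto
  then show ?thesis unfolding word_dist_def word_length_def by (rule Least_le)
qed

end

lemma hausdorff_word_less_obtain:
  assumes "hausdorff_word H T X Y < ereal M" "x \<in> X"
  obtains y where "y \<in> Y" "real (word_dist H T x y) < M"
proof -
  have "(INF y\<in>Y. ereal (real (word_dist H T x y))) \<le> (SUP x\<in>X. INF y\<in>Y. ereal (real (word_dist H T x y)))"
    using assms(2) by (rule SUP_upper)
  also have "\<dots> \<le> hausdorff_word H T X Y" unfolding hausdorff_word_def by simp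
  finally have "(INF y\<in>Y. ereal (real (word_dist H T x y))) < ereal M"
    using assms(1) by (rule le_less_trans)
  then obtain y where "y \<in> Y" "ereal (real (word_dist H T x y)) < ereal M"
    unfolding INF_less_iff by blast
  then show ?thesis using that less_ereal.simps(1) by blast
qed

lemma lipschitz_pairD:
  assumes "lipschitz_pair G S I P H T J Q L C M f1 f2"
  shows "L \<ge> 1" "C \<ge> 0" "M \<ge> 0" "\<And>x. x \<in> carrier G \<Longrightarrow> f1 x \<in> carrier H"
    "\<And>A. A \<in> cosets_pair G I P \<Longrightarrow> f2 A \<in> cosets_pair H J Q"
    "\<And>x y. x \<in> carrier G \<Longrightarrow> y \<in> carrier G \<Longrightarrow>
        real (word_dist H T (f1 x) (f1 y)) \<le> L * real (word_dist G S x y) + C"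
    "\<And>A. A \<in> cosets_pair G I P \<Longrightarrow> hausdorff_word H T (f1 ` snd A) (snd (f2 A)) < ereal M"
  using assms unfolding lipschitz_pair_def by (auto simp: Pi_iff)

lemma map_sum_cone_vertices:
  assumes "lipschitz_pair G S I P H T J Q L C M f1 f2"
  shows "map_sum f1 f2 ` cone_vertices G I P \<subseteq> cone_vertices H J Q"
  using lipschitz_pairD(4,5)[OF assms] by (auto simp: cone_vertices_def)

lemma edge_image_to_cone_vertex:
  assumes "group_pair G I P" "group_pair H J Q" "fin_gen_set H T"
    and f: "lipschitz_pair G S I P H T J Q L C M f1 f2" and K: "M \<le> real K"
    and A: "A \<in> cosets_pair G I P" "g \<in> snd A"
  shows "\<exists>p. edge_path (cone_vertices H J Q) (cone_adj H T) p \<and> hd p = Inl (f1 g) \<and>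
    last p = Inr (f2 A) \<and> length (tl p) \<le> Suc K \<and> cone_count p = 1"
proof -
  have "group H" using assms(2) by (simp add: group_pair_def)
  have g: "g \<in> carrier G" using cosets_pair_subset_carrier[OF assms(1) A(1)] A(2) by auto
  have f2A: "f2 A \<in> cosets_pair H J Q" using lipschitz_pairD(5)[OF f A(1)] .
  obtain h where h: "h \<in> snd (f2 A)" "real (word_dist H T (f1 g) h) < M"
    using hausdorff_word_less_obtain[OF lipschitz_pairD(7)[OF f A(1)]] A(2) by blast
  have "h \<in> carrier H" using cosets_pair_subset_carrier[OF assms(2) f2A] h(1) by auto
  then obtain p where p: "edge_path (cone_vertices H J Q) (cone_adj H T) p" "hd p = Inl (f1 g)"
    "last p = Inl h" "length p = Suc (word_dist H T (f1 g) h)" "cone_count p = 0"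
    using group.word_dist_edge_path[OF \<open>group H\<close> assms(3) lipschitz_pairD(4)[OF f g]] by blast
  have "edge_path (cone_vertices H J Q) (cone_adj H T) (p @ [Inr (f2 A)])"
    using edge_path_appendI[OF p(1), of "[Inr (f2 A)]"] p(3) f2A h(1) by (simp add: cone_adj_def)
  moreover have "word_dist H T (f1 g) h \<le> K" using h(2) K by linarith
  ultimately show ?thesis using p
    by (intro exI[of _ "p @ [Inr (f2 A)]"]) (auto simp: is_cone_vertex_def edge_path_def)
qed

lemma cone_adj_edge_image:
  assumes G: "group_pair G I P" and H: "group_pair H J Q" "fin_gen_set H T"
    and f: "lipschitz_pair G S I P H T J Q L C M f1 f2" and K: "L + C + M \<le> real K"
    and x: "x \<in> cone_vertices G I P" and y: "y \<in> cone_vertices G I P" and xy: "cone_adj G S x y"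
  shows "\<exists>p. edge_path (cone_vertices H J Q) (cone_adj H T) p \<and>
    hd p = map_sum f1 f2 x \<and> last p = map_sum f1 f2 y \<and>
    length (tl p) \<le> Suc K \<and> cone_count (tl p) \<le> cone_count [y]"
proof -
  have L: "L \<ge> 1" "C \<ge> 0" "M \<ge> 0" using lipschitz_pairD[OF f] by auto
  have "M \<le> real K" using K L by linarith
  note image_to_cone = edge_image_to_cone_vertex[OF G H f this]
  consider (group_edge) g g' where "x = Inl g" "y = Inl g'" | (to_cone) g A where "x = Inl g" "y = Inr A"
    | (from_cone) g A where "x = Inr A" "y = Inl g"
    using xy by (cases x; cases y) (auto simp: cone_adj_def)
  then show ?thesis
  proof cases
    case group_edge
    have g: "g \<in> carrier G" "g' \<in> carrier G" using x y group_edge by auto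
    have "real (word_dist H T (f1 g) (f1 g')) \<le> L * real (word_dist G S g g') + C"
      using lipschitz_pairD(6)[OF f g] .
    also have "\<dots> \<le> L * 1 + C"
      using group.word_dist_le_1_if_cone_adj[of G g g' S] G g xy group_edge L
      by (simp add: group_pair_def)
    finally have short: "word_dist H T (f1 g) (f1 g') \<le> K" using K L by linarith
    obtain p where "edge_path (cone_vertices H J Q) (cone_adj H T) p" "hd p = Inl (f1 g)" "last p = Inl (f1 g')"
      "length p = Suc (word_dist H T (f1 g) (f1 g'))" "cone_count p = 0"
      using group.word_dist_edge_path[OF _ H(2) lipschitz_pairD(4)[OF f g(1)] lipschitz_pairD(4)[OF f g(2)]] H(1)
      unfolding group_pair_def by blast
    then show ?thesis using short group_edge by (intro exI[of _ p]) (cases p; auto)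
  next
    case to_cone
    then have "A \<in> cosets_pair G I P" "g \<in> snd A" using y xy by (auto simp: cone_adj_def)
    then obtain p where "edge_path (cone_vertices H J Q) (cone_adj H T) p" "hd p = Inl (f1 g)"
      "last p = Inr (f2 A)" "length (tl p) \<le> Suc K" "cone_count p = 1"
      using image_to_cone by blast
    then show ?thesis using to_cone by (intro exI[of _ p]) (cases p; auto simp: is_cone_vertex_def)
  next
    case from_cone
    then have "A \<in> cosets_pair G I P" "g \<in> snd A" using x xy by (auto simp: cone_adj_def)
    then obtain p where p: "edge_path (cone_vertices H J Q) (cone_adj H T) p" "hd p = Inl (f1 g)"
      "last p = Inr (f2 A)" "length (tl p) \<le> Suc K" "cone_count p = 1"
      using image_to_cone by blast
    have "edge_path (cone_vertices H J Q) (cone_adj H T) (rev p)"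
      using p(1) edge_path_rev[of "cone_adj H T"] cone_adj_sym by blast
    moreover have "p \<noteq> []" using p(1) by (simp add: edge_path_def)
    moreover have "cone_count (tl (rev p)) = 0"
    proof -
      have "tl (rev p) = rev (butlast p)" using butlast_rev[of "rev p"] by simp
      then show ?thesis using p(3,5) arg_cong[OF append_butlast_last_id[OF \<open>p \<noteq> []\<close>], of cone_count]
        by (simp add: is_cone_vertex_def)
    qed
    ultimately show ?thesis using p from_cone
      by (intro exI[of _ "rev p"]) (auto simp: hd_rev last_rev is_cone_vertex_def)
  qed
qed

lemma lipschitz_pair_path_map:
  assumes G: "group_pair G I P" and H: "group_pair H J Q" "fin_gen_set H T"
    and f: "lipschitz_pair G S I P H T J Q L C M f1 f2" and K: "L + C + M \<le> real K"
  obtains \<tau> where "path_map (cone_vertices G I P) (cone_adj G S) (cone_vertices H J Q) (cone_adj H T) (map_sum f1 f2) \<tau>"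
    "bounded_edge_images (Suc K) \<tau>"
proof -
  let ?F = "map_sum f1 f2"
  let ?image = "\<lambda>x y p. edge_path (cone_vertices H J Q) (cone_adj H T) p \<and> hd p = ?F x \<and> last p = ?F y \<and>
    length (tl p) \<le> Suc K \<and> cone_count (tl p) \<le> cone_count [y]"
  define \<tau> where "\<tau> x y = (if x \<in> cone_vertices G I P \<and> y \<in> cone_vertices G I P \<and> cone_adj G S x y
    then SOME p. ?image x y p else [?F x, ?F y])" for x y
  have edge: "?image x y (\<tau> x y)"
    if "x \<in> cone_vertices G I P" "y \<in> cone_vertices G I P" "cone_adj G S x y" for x y
    using someI_ex[OF cone_adj_edge_image[OF G H f K that]] that unfolding \<tau>_def by simp
  have "\<tau> x y \<noteq> [] \<and> hd (\<tau> x y) = ?F x \<and> last (\<tau> x y) = ?F y \<and>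
      length (tl (\<tau> x y)) \<le> Suc K \<and> cone_count (tl (\<tau> x y)) \<le> cone_count [y]" for x y
    using edge[of x y] by (cases "x \<in> cone_vertices G I P \<and> y \<in> cone_vertices G I P \<and> cone_adj G S x y")
      (auto simp: \<tau>_def edge_path_def)
  then show ?thesis
    using that[of \<tau>] edge map_sum_cone_vertices[OF f] by (auto simp: path_map_def bounded_edge_images_def)
qed

lemma retraction_connecting_paths:
  assumes G: "group_pair G I P" "fin_gen_set G S"
    and f: "lipschitz_pair G S I P H T J Q L C M f1 f2" and r: "lipschitz_pair H T J Q G S I P L C M r1 r2"
    and retract: "\<forall>g\<in>carrier G. real (word_dist G S (r1 (f1 g)) g) \<le> C" "\<forall>A\<in>cosets_pair G I P. r2 (f2 A) = A"
    and K: "L + C + M \<le> real K"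
  obtains \<sigma> where "\<And>v. v \<in> cone_vertices G I P \<Longrightarrow> edge_path (cone_vertices G I P) (cone_adj G S) (\<sigma> v) \<and>
    hd (\<sigma> v) = v \<and> last (\<sigma> v) = map_sum r1 r2 (map_sum f1 f2 v) \<and>
    length (\<sigma> v) \<le> Suc K \<and> cone_count (\<sigma> v) = cone_count [v]"
proof -
  have "\<exists>p. edge_path (cone_vertices G I P) (cone_adj G S) p \<and> hd p = v \<and>
      last p = map_sum r1 r2 (map_sum f1 f2 v) \<and> length p \<le> Suc K \<and> cone_count p = cone_count [v]"
    if v: "v \<in> cone_vertices G I P" for v
  proof (cases v)
    case (Inl g)
    have g: "g \<in> carrier G" using v Inl by simp
    have "r1 (f1 g) \<in> carrier G" by (rule lipschitz_pairD(4)[OF r lipschitz_pairD(4)[OF f g]])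
    then obtain p where p: "edge_path (cone_vertices G I P) (cone_adj G S) p" "hd p = Inl (r1 (f1 g))"
      "last p = Inl g" "length p = Suc (word_dist G S (r1 (f1 g)) g)" "cone_count p = 0"
      using group.word_dist_edge_path[OF _ G(2) _ g] G(1) unfolding group_pair_def by blast
    have "word_dist G S (r1 (f1 g)) g \<le> K" using retract(1) g K lipschitz_pairD(1,3)[OF f] by fastforce
    moreover have "edge_path (cone_vertices G I P) (cone_adj G S) (rev p)"
      using p(1) edge_path_rev[of "cone_adj G S"] cone_adj_sym by blast
    ultimately show ?thesis using p Inl
      by (intro exI[of _ "rev p"]) (auto simp: hd_rev last_rev is_cone_vertex_def edge_path_def)
  next
    case (Inr A)
    then show ?thesis using v retract(2) by (intro exI[of _ "[v]"]) (auto simp: is_cone_vertex_def)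
  qed
  then obtain \<sigma> where "\<forall>v\<in>cone_vertices G I P. edge_path (cone_vertices G I P) (cone_adj G S) (\<sigma> v) \<and>
      hd (\<sigma> v) = v \<and> last (\<sigma> v) = map_sum r1 r2 (map_sum f1 f2 v) \<and>
      length (\<sigma> v) \<le> Suc K \<and> cone_count (\<sigma> v) = cone_count [v]"
    by metis
  then show ?thesis using that by blast
qed

lemma cone_vertex_to_group_vertex:
  assumes "group_pair G I P" "u \<in> cone_vertices G I P"
  obtains g p where "g \<in> carrier G" "edge_path (cone_vertices G I P) (cone_adj G S) p" "hd p = u" "last p = Inl g"
proof (cases u)
  case (Inl g)
  then show ?thesis using that[of g "[u]"] assms(2) by simp
next
  case (Inr A)
  then have A: "A \<in> cosets_pair G I P" using assms(2) by simp
  then obtain a where a: "a \<in> snd A" using cosets_pair_subset_carrier(2)[OF assms(1)] by blast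
  then have "a \<in> carrier G" using cosets_pair_subset_carrier(1)[OF assms(1) A] by blast
  moreover have "edge_path (cone_vertices G I P) (cone_adj G S) [Inr A, Inl a]"
    using A a \<open>a \<in> carrier G\<close> by (simp add: edge_path_Cons_Cons cone_adj_def)
  ultimately show ?thesis using that[of a "[Inr A, Inl a]"] Inr by simp
qed

lemma cone_graph_connected:
  assumes G: "group_pair G I P" "fin_gen_set G S"
    and uv: "u \<in> cone_vertices G I P" "v \<in> cone_vertices G I P"
  shows "\<exists>p. edge_path (cone_vertices G I P) (cone_adj G S) p \<and> hd p = u \<and> last p = v"
proof -
  obtain g p where p: "g \<in> carrier G" "edge_path (cone_vertices G I P) (cone_adj G S) p" "hd p = u" "last p = Inl g"
    using cone_vertex_to_group_vertex[OF G(1) uv(1)] .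
  obtain g' q where q: "g' \<in> carrier G" "edge_path (cone_vertices G I P) (cone_adj G S) q" "hd q = v" "last q = Inl g'"
    using cone_vertex_to_group_vertex[OF G(1) uv(2)] .
  obtain c where c: "edge_path (cone_vertices G I P) (cone_adj G S) c" "hd c = Inl g" "last c = Inl g'"
    using group.word_dist_edge_path[OF _ G(2) p(1) q(1)] G(1) unfolding group_pair_def by blast
  have rev_q: "edge_path (cone_vertices G I P) (cone_adj G S) (rev q)" "rev q \<noteq> []"
    using q(2) edge_path_rev[of "cone_adj G S"] cone_adj_sym by (blast, simp add: edge_path_def)
  have pc: "edge_path (cone_vertices G I P) (cone_adj G S) (p @ tl c)" "last (p @ tl c) = Inl g'"
    using edge_path_append_tl[OF p(2) c(1)] p c by (auto simp: edge_path_def)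
  then have "edge_path (cone_vertices G I P) (cone_adj G S) ((p @ tl c) @ tl (rev q))"
    using edge_path_append_tl[OF pc(1) rev_q(1)] q(4) by (simp add: hd_rev)
  moreover have "last ((p @ tl c) @ tl (rev q)) = v"
    using last_append_tl[of "rev q" "p @ tl c"] pc(2) rev_q(2) q(3,4) by (simp add: hd_rev last_rev)
  ultimately show ?thesis using p(2,3) by (intro exI[of _ "(p @ tl c) @ tl (rev q)"]) (auto simp: edge_path_def)
qed

lemma simply_connected_cone_complexI:
  assumes "group_pair G I P" "fin_gen_set G S"
    and "\<And>\<gamma>. edge_path (cone_vertices G I P) (cone_adj G S) \<gamma> \<Longrightarrow> hd \<gamma> = last \<gamma> \<Longrightarrow>
      homotopic (cone_vertices G I P) (cone_adj G S) Cells \<gamma> [hd \<gamma>]"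
  shows "simply_connected_2cx (cone_vertices G I P) (cone_adj G S) Cells"
proof -
  have "\<one>\<^bsub>G\<^esub> \<in> carrier G" using assms(1) by (simp add: group_pair_def group.is_monoid monoid.one_closed)
  then have "cone_vertices G I P \<noteq> {}" by (auto simp: cone_vertices_def)
  then show ?thesis using cone_graph_connected[OF assms(1,2)] assms(3) unfolding simply_connected_2cx_def by blast
qed

lemma cone_cells_are_loops: "\<forall>c\<in>cone_cells G I P S l. edge_loop (cone_vertices G I P) (cone_adj G S) c"
  by (simp add: cone_cells_def)

lemma loop_image_in_cone_cells:
  assumes map: "path_map (cone_vertices H J Q) (cone_adj H T) (cone_vertices G I P) (cone_adj G S) (map_sum r1 r2) \<rho>"
    and bounded: "bounded_edge_images B \<rho>" and l': "B * (l + 2) < l'"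
    and c: "edge_path (cone_vertices H J Q) (cone_adj H T) (c @ [hd c])" "c \<in> cone_cells H J Q T l \<or> length c = 2"
    and nonempty: "loop_image (map_sum r1 r2) \<rho> c \<noteq> []"
  shows "loop_image (map_sum r1 r2) \<rho> c \<in> cone_cells G I P S l'"
proof -
  have "cone_count c \<le> 1"
  proof (cases "length c = 2")
    case True
    then obtain u v where uv: "c = [u, v]" by (auto simp: length_Suc_conv numeral_2_eq_2)
    then have "cone_adj H T u v" using c(1) by (simp add: edge_path_Cons_Cons)
    then show ?thesis using cone_adj_cone_vertex[of H T u v] uv by auto
  next
    case False
    then show ?thesis using c(2) by (simp add: cone_cells_def unicone_iff_cone_count)
  qed
  then have "unicone (loop_image (map_sum r1 r2) \<rho> c)"
    using cone_count_loop_image[OF map bounded, of c] unfolding unicone_iff_cone_count by simp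
  moreover have "length c \<le> l + 2" using c(2) by (auto simp: cone_cells_def)
  then have "length (loop_image (map_sum r1 r2) \<rho> c) < l'"
    using length_loop_image[OF bounded, of "map_sum r1 r2" c] mult_le_mono2[of "length c" "l + 2" B] l'
    by linarith
  ultimately show ?thesis using edge_loop_loop_image[OF map c(1) nonempty] by (simp add: cone_cells_def)
qed

lemma ladder_cell_in_cone_cells:
  assumes \<tau>: "path_map (cone_vertices G I P) (cone_adj G S) (cone_vertices H J Q) (cone_adj H T) (map_sum f1 f2) \<tau>"
      "bounded_edge_images B \<tau>"
    and \<rho>: "path_map (cone_vertices H J Q) (cone_adj H T) (cone_vertices G I P) (cone_adj G S) (map_sum r1 r2) \<rho>"
      "bounded_edge_images B \<rho>"
    and \<sigma>: "\<And>v. v \<in> cone_vertices G I P \<Longrightarrow> edge_path (cone_vertices G I P) (cone_adj G S) (\<sigma> v) \<and>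
      hd (\<sigma> v) = v \<and> last (\<sigma> v) = map_sum r1 r2 (map_sum f1 f2 v) \<and>
      length (\<sigma> v) \<le> B \<and> cone_count (\<sigma> v) = cone_count [v]"
    and l': "(B + 1) * (B + 1) \<le> l'"
    and xz: "x \<in> cone_vertices G I P" "z \<in> cone_vertices G I P" "cone_adj G S x z"
  shows "ladder_cell \<sigma> (path_image (map_sum r1 r2) \<rho> \<circ> path_image (map_sum f1 f2) \<tau>) x z \<in> cone_cells G I P S l'"
proof -
  let ?cell = "ladder_cell \<sigma> (path_image (map_sum r1 r2) \<rho> \<circ> path_image (map_sum f1 f2) \<tau>) x z"
  have "edge_loop (cone_vertices G I P) (cone_adj G S) ?cell \<and> unicone ?cell \<and> length ?cell < (B + 1) * (B + 1)"
  proof (rule ladder_cell_bounds[OF _ _ \<tau>(1) \<rho>(1) _ _ \<tau>(2) \<rho>(2) \<sigma> xz])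
    show "\<And>x y. cone_adj G S x y \<Longrightarrow> cone_adj G S y x" by (rule cone_adj_sym)
    show "\<And>x y. cone_adj G S x y \<Longrightarrow> is_cone_vertex x \<Longrightarrow> \<not> is_cone_vertex y"
      by (rule cone_adj_cone_vertex)
  qed simp_all
  with l' show ?thesis unfolding cone_cells_def by simp
qed

lemma cone_complex_null_homotopic_by_retraction:
  assumes \<tau>: "path_map (cone_vertices G I P) (cone_adj G S) (cone_vertices H J Q) (cone_adj H T) (map_sum f1 f2) \<tau>"
      "bounded_edge_images B \<tau>"
    and \<rho>: "path_map (cone_vertices H J Q) (cone_adj H T) (cone_vertices G I P) (cone_adj G S) (map_sum r1 r2) \<rho>"
      "bounded_edge_images B \<rho>"
    and \<sigma>: "\<And>v. v \<in> cone_vertices G I P \<Longrightarrow> edge_path (cone_vertices G I P) (cone_adj G S) (\<sigma> v) \<and>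
      hd (\<sigma> v) = v \<and> last (\<sigma> v) = map_sum r1 r2 (map_sum f1 f2 v) \<and>
      length (\<sigma> v) \<le> B \<and> cone_count (\<sigma> v) = cone_count [v]"
    and H_null: "\<And>p. edge_path (cone_vertices H J Q) (cone_adj H T) p \<Longrightarrow> hd p = last p \<Longrightarrow>
      homotopic (cone_vertices H J Q) (cone_adj H T) (cone_cells H J Q T l) p [hd p]"
    and \<gamma>: "edge_path (cone_vertices G I P) (cone_adj G S) \<gamma>" "hd \<gamma> = last \<gamma>"
  shows "homotopic (cone_vertices G I P) (cone_adj G S) (cone_cells G I P S ((B + 1) * (B + 1) * (l + 2))) \<gamma> [hd \<gamma>]"
proof -
  \<comment> \<open>the bound exceeds the lengths B (l + 2) of the images of H's cells and backtracks and
    (B + 1)^2 of the ladder cells\<close>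
  let ?l' = "(B + 1) * (B + 1) * (l + 2)"
  have "B < (B + 1) * (B + 1)" using mult_le_mono2[of 1 "B + 1" "B + 1"] by simp
  then have images: "B * (l + 2) < ?l'" by (intro mult_less_mono1) simp_all
  have ladder: "(B + 1) * (B + 1) \<le> ?l'" using mult_le_mono2[of 1 "l + 2" "(B + 1) * (B + 1)"] by simp
  show ?thesis
  proof (rule null_homotopic_by_retraction[OF _ cone_cells_are_loops \<tau>(1) \<rho>(1) _
        ladder_cell_in_cone_cells[OF \<tau> \<rho> \<sigma> ladder] cone_cells_are_loops H_null
        loop_image_in_cone_cells[OF \<rho> images] \<gamma>])
    show "\<And>x y. cone_adj G S x y \<Longrightarrow> cone_adj G S y x" by (rule cone_adj_sym)
  qed (use \<sigma> in blast)
qed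

theorem lemma4p9:
  fixes G :: "('a, 'c) monoid_scheme" and I :: "'i set" and P :: "'i \<Rightarrow> 'a set" and S :: "'a set"
    and H :: "('b, 'd) monoid_scheme" and J :: "'j set" and Q :: "'j \<Rightarrow> 'b set" and T :: "'b set"
  assumes "group_pair G I P" and "fin_gen_set G S"
    and "group_pair H J Q" and "fin_gen_set H T"
    and "quasi_retract_pair G S I P H T J Q"
    and "coarsely_unicone_sc H J Q T"
  shows "coarsely_unicone_sc G I P S"
proof -
  obtain L C M f1 f2 r1 r2 where f: "lipschitz_pair G S I P H T J Q L C M f1 f2"
    and r: "lipschitz_pair H T J Q G S I P L C M r1 r2"
    and retract: "\<forall>g\<in>carrier G. real (word_dist G S (r1 (f1 g)) g) \<le> C" "\<forall>A\<in>cosets_pair G I P. r2 (f2 A) = A"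
    using assms(5) unfolding quasi_retract_pair_def by blast
  obtain l where "simply_connected_2cx (cone_vertices H J Q) (cone_adj H T) (cone_cells H J Q T l)"
    using assms(6) unfolding coarsely_unicone_sc_def by blast
  then have H_null: "\<And>p. edge_path (cone_vertices H J Q) (cone_adj H T) p \<Longrightarrow> hd p = last p \<Longrightarrow>
      homotopic (cone_vertices H J Q) (cone_adj H T) (cone_cells H J Q T l) p [hd p]"
    unfolding simply_connected_2cx_def by blast
  define K where "K = nat \<lceil>L + C + M\<rceil>"
  have K: "L + C + M \<le> real K" unfolding K_def by linarith
  let ?VG = "cone_vertices G I P" and ?VH = "cone_vertices H J Q"
  obtain \<tau> where \<tau>: "path_map ?VG (cone_adj G S) ?VH (cone_adj H T) (map_sum f1 f2) \<tau>"
      "bounded_edge_images (Suc K) \<tau>"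
    using lipschitz_pair_path_map[OF assms(1,3,4) f K] .
  obtain \<rho> where \<rho>: "path_map ?VH (cone_adj H T) ?VG (cone_adj G S) (map_sum r1 r2) \<rho>"
      "bounded_edge_images (Suc K) \<rho>"
    using lipschitz_pair_path_map[OF assms(3,1,2) r K] .
  obtain \<sigma> where \<sigma>: "\<And>v. v \<in> ?VG \<Longrightarrow> edge_path ?VG (cone_adj G S) (\<sigma> v) \<and>
      hd (\<sigma> v) = v \<and> last (\<sigma> v) = map_sum r1 r2 (map_sum f1 f2 v) \<and>
      length (\<sigma> v) \<le> Suc K \<and> cone_count (\<sigma> v) = cone_count [v]"
    using retraction_connecting_paths[OF assms(1,2) f r retract K] by blast
  have "simply_connected_2cx ?VG (cone_adj G S) (cone_cells G I P S ((Suc K + 1) * (Suc K + 1) * (l + 2)))"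
    by (rule simply_connected_cone_complexI[OF assms(1,2)
          cone_complex_null_homotopic_by_retraction[OF \<tau> \<rho> \<sigma> H_null]])
  then show ?thesis unfolding coarsely_unicone_sc_def by blast
qed

end
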